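(* For every state $(S_i)_{i\in\mathbb Z}$ of the box-basket-ball system, the state obtained by the carrier description of $T_\infty$ coincides with the state obtained by the combinatorial description of the time evolution (both as defined in the context).
   Context: Box-basket-ball system (BBBS). A site state is a triple $(a,b,c)$ of nonnegative integers with $a=b-c+1$; it models a site containing one box, $b$ baskets and $c$ balls, where each box or basket holds at most one ball (balls are placed in the box first whenever possible), so $a$ is the number of unoccupied boxes/baskets and $\min(a,b)$ is the number of empty baskets. Write $V=(1,0,0)$ (vacuum). A state is a sequence $(S_i)_{i\in\mathbb Z}$ of site states with $S_i=V$ for all but finitely many $i$. Carrier description of $T_\infty$: a carrier, initially in state $(\infty,0,0)$, passes through the sites from left ($i\to-\infty$) to right; when the carrier in state $(\infty,b,c)$ meets the site $S_i=(d,e,f)$, the site becomes $S_i'=(d',e',f')$ and the carrier becomes $(\infty,b',c')$, where $d'=d+b+f-\min(e+c,d+c,d+b)$, $e'=e+b-\min(d,e)$, $f'=\min(e+c,d+c,d+b)-\min(d,e)$, $b'=\min(d,e)$, $c'=c+f+\min(d,e)-\min(e+c,d+c,d+b)$. The new state is $(S_i')_{i\in\mathbb Z}$. Combinatorial description: first, every empty basket is moved from its site $i$ to site $i+1$ (full baskets are not moved); second, the balls are considered one at a time from left to right, and each ball is moved to the nearest currently unoccupied box or basket located at a site strictly to its right; each ball is moved exactly once. *)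

theory Defs
  imports Main
begin

text \<open>Site states (a,b,c): a = unoccupied boxes/baskets, b = baskets, c = balls.\<close>
type_synonym site = "int \<times> int \<times> int"
type_synonym bstate = "int \<Rightarrow> site"

definition vac :: site where "vac = (1, 0, 0)"

definition valid_site :: "site \<Rightarrow> bool" where
  "valid_site s = (case s of (a, b, c) \<Rightarrow> a \<ge> 0 \<and> b \<ge> 0 \<and> c \<ge> 0 \<and> a = b - c + 1)"

definition is_state :: "bstate \<Rightarrow> bool" where
  "is_state S = ((\<forall>i. valid_site (S i)) \<and> finite {i. S i \<noteq> vac})"

definition support :: "bstate \<Rightarrow> int set" where
  "support S = {i. S i \<noteq> vac}"

text \<open>The carrier (\<infinity>,b,c) is represented by the pair (b,c). One local interaction:
  site (d,e,f) and carrier (b,c) give new site and new carrier.\<close>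
definition carrier_step :: "site \<Rightarrow> int \<times> int \<Rightarrow> site \<times> (int \<times> int)" where
  "carrier_step s bc = (case s of (d, e, f) \<Rightarrow> case bc of (b, c) \<Rightarrow>
     (let m = min (e + c) (min (d + c) (d + b)); k = min d e in
      ((d + b + f - m, e + b - k, m - k), (k, c + f + k - m))))"

text \<open>Leftmost non-vacuum site; the carrier starts in state (\<infinity>,0,0) and, as it
  passes vacuum sites unchanged, we may start it at this site.\<close>
definition lo :: "bstate \<Rightarrow> int" where
  "lo S = (if support S = {} then 0 else Min (support S))"

fun carr_iter :: "bstate \<Rightarrow> int \<Rightarrow> nat \<Rightarrow> int \<times> int" where
  "carr_iter S L 0 = (0, 0)"
| "carr_iter S L (Suc n) = snd (carrier_step (S (L + int n)) (carr_iter S L n))"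

definition carrier_before :: "bstate \<Rightarrow> int \<Rightarrow> int \<times> int" where
  "carrier_before S i = carr_iter S (lo S) (nat (i - lo S))"

definition T_carrier :: "bstate \<Rightarrow> bstate" where
  "T_carrier S i = fst (carrier_step (S i) (carrier_before S i))"

definition empty_baskets :: "site \<Rightarrow> int" where
  "empty_baskets s = (case s of (a, b, c) \<Rightarrow> min a b)"

definition baskets :: "site \<Rightarrow> int" where
  "baskets s = fst (snd s)"

definition balls :: "site \<Rightarrow> int" where
  "balls s = snd (snd s)"

text \<open>Step 1: empty baskets move one site to the right.  Number of baskets at site i
  afterwards, and number of unoccupied boxes/baskets (containers minus balls) at site i.\<close>
definition baskets1 :: "bstate \<Rightarrow> int \<Rightarrow> int" where
  "baskets1 S i = baskets (S i) - empty_baskets (S i) + empty_baskets (S (i - 1))"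

definition free1 :: "bstate \<Rightarrow> int \<Rightarrow> int" where
  "free1 S i = 1 + baskets1 S i - balls (S i)"

definition ball_list :: "bstate \<Rightarrow> int list" where
  "ball_list S = concat (map (\<lambda>i. replicate (nat (balls (S i))) i)
                          (sorted_list_of_set (support S)))"

text \<open>Moving one ball located at site p: it goes to the nearest site strictly to the
  right having an unoccupied box/basket.\<close>
definition move_ball :: "int \<Rightarrow> (int \<Rightarrow> int) \<times> (int \<Rightarrow> int) \<Rightarrow> (int \<Rightarrow> int) \<times> (int \<Rightarrow> int)" where
  "move_ball p st = (case st of (free, landed) \<Rightarrow>
     (let j = p + 1 + int (LEAST n. free (p + 1 + int n) > 0) in
      (((free(p := free p + 1))(j := free j - 1)), landed(j := landed j + 1))))"

definition T_comb :: "bstate \<Rightarrow> bstate" where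
  "T_comb S i = (let landed = snd (fold move_ball (ball_list S) (free1 S, \<lambda>_. 0))
                 in (baskets1 S i - landed i + 1, baskets1 S i, landed i))"

end

theory Submission
  imports Defs
begin

(* After the empty baskets have moved, site j offers F j = free1 S j unoccupied
   boxes/baskets and still holds its balls.  Moving the balls one at a time, left to right,
   to the nearest free place on the right is a greedy filling: the number C j of balls that
   are "in transit" past site j obeys C (j+1) = C j - min (C j) (F j) + balls (S j), and
   min (C j) (F j) of them land at site j.  The carrier of T_infinity carries exactly these
   quantities: its first component is the number of empty baskets of the previous site and
   its second component satisfies the same recursion. *)

section \<open>Greedy filling of a capacity profile\<close>

text \<open>c balls enter at site p and fill, from left to right, the F j free places of the sites
  j \<ge> p.  in_transit F c p n is the number of balls that pass beyond site p + n - 1.\<close>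
fun in_transit :: "(int \<Rightarrow> int) \<Rightarrow> int \<Rightarrow> int \<Rightarrow> nat \<Rightarrow> int" where
  "in_transit F c p 0 = c"
| "in_transit F c p (Suc n) = in_transit F c p n - min (in_transit F c p n) (F (p + int n))"

definition landed_at :: "(int \<Rightarrow> int) \<Rightarrow> int \<Rightarrow> int \<Rightarrow> int \<Rightarrow> int" where
  "landed_at F c p j = min (in_transit F c p (nat (j - p))) (F j)"

lemma in_transit_nonneg: "c \<ge> 0 \<Longrightarrow> in_transit F c p n \<ge> 0"
  by (induction n) auto

lemma in_transit_zero: "\<forall>j. F j \<ge> 0 \<Longrightarrow> in_transit F 0 p n = 0"
  by (induction n) auto

lemma in_transit_Suc_shift:
  "in_transit F c p (Suc n) = in_transit F (c - min c (F p)) (p + 1) n"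
  by (induction n) (auto simp: algebra_simps)

lemma in_transit_extra_ball_before:
  assumes full: "\<forall>m<q. in_transit F c p m \<ge> F (p + int m)" and "n \<le> q"
  shows "in_transit F (c + 1) p n = in_transit F c p n + 1"
  using assms(2)
proof (induction n)
  case (Suc n)
  then have "in_transit F c p n \<ge> F (p + int n)" using full by auto
  with Suc show ?case by (simp add: min_def)
qed simp

lemma in_transit_extra_ball_after:
  assumes full: "\<forall>m<q. in_transit F c p m \<ge> F (p + int m)"
    and not_full: "in_transit F c p q < F (p + int q)"
    and "c \<ge> 0" and "\<forall>j. F j \<ge> 0" and "q < n"
  shows "in_transit F (c + 1) p n = 0 \<and> in_transit F c p n = 0"
  using \<open>q < n\<close>
proof (induction n)
  case (Suc n)
  show ?case
  proof (cases "n = q")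
    case True
    have "in_transit F (c + 1) p q = in_transit F c p q + 1"
      using in_transit_extra_ball_before[OF full] by simp
    moreover have "in_transit F c p q \<ge> 0" using in_transit_nonneg \<open>c \<ge> 0\<close> by blast
    ultimately show ?thesis using True not_full by (simp add: min_def)
  next
    case False
    with Suc show ?thesis using \<open>\<forall>j. F j \<ge> 0\<close> by simp
  qed
qed simp

lemma in_transit_absorbed:
  assumes "c \<ge> 0" and "\<forall>j\<ge>H. F j \<ge> 1"
  shows "\<exists>q. in_transit F c p q < F (p + int q)"
proof (rule ccontr)
  assume "\<not> ?thesis"
  hence full: "\<forall>q. in_transit F c p q \<ge> F (p + int q)" by (auto simp: not_less)
  define M where "M = nat (H - p)"
  have decreasing: "in_transit F c p (M + n) \<le> in_transit F c p M - int n" for n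
  proof (induction n)
    case (Suc n)
    have "F (p + int (M + n)) \<ge> 1" using assms(2) M_def by auto
    with full[rule_format, of "M + n"] Suc show ?case by (simp add: min_def)
  qed simp
  define g where "g = in_transit F c p M"
  have "in_transit F c p (M + (nat g + 1)) \<ge> 0" using in_transit_nonneg[OF assms(1)] by blast
  moreover have "g \<ge> 0" using in_transit_nonneg[OF assms(1)] g_def by blast
  ultimately show False using decreasing[of "nat g + 1"] g_def by linarith
qed

section \<open>The invariant of the ball-moving process\<close>

text \<open>F is the profile of free places after the baskets have moved, C the number of balls in
  transit in front of each site.\<close>
definition sweep_invariant ::
  "(int \<Rightarrow> int) \<Rightarrow> (int \<Rightarrow> int) \<Rightarrow> int \<Rightarrow> int \<Rightarrow> (int \<Rightarrow> int) \<times> (int \<Rightarrow> int) \<Rightarrow> bool" where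
  "sweep_invariant F C p c st =
     ((\<forall>j<p. snd st j = min (C j) (F j)) \<and>
      (\<forall>j\<ge>p. snd st j = landed_at F c p j \<and> fst st j = F j - snd st j))"

text \<open>Moving one more ball from site p adds one ball entering at p + 1: the ball goes to the
  first site that is not yet filled up, which is exactly where the greedy filling puts it.\<close>
lemma sweep_invariant_move_ball:
  assumes inv: "sweep_invariant F C (p + 1) c st" and "c \<ge> 0"
    and F_nonneg: "\<forall>j. F j \<ge> 0" and F_far: "\<forall>j\<ge>H. F j \<ge> 1"
  shows "sweep_invariant F C (p + 1) (c + 1) (move_ball p st)"
proof -
  obtain free landed where st: "st = (free, landed)" by (cases st)
  have free_pos: "free (p + 1 + int n) > 0 \<longleftrightarrow> in_transit F c (p + 1) n < F (p + 1 + int n)" for n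
    using inv st by (auto simp: sweep_invariant_def landed_at_def min_def)
  define q where "q = (LEAST n. free (p + 1 + int n) > 0)"
  have some_free: "\<exists>n. free (p + 1 + int n) > 0"
    using in_transit_absorbed[OF \<open>c \<ge> 0\<close> F_far, of "p + 1"] free_pos by blast
  have not_full: "in_transit F c (p + 1) q < F (p + 1 + int q)"
    using LeastI_ex[OF some_free] free_pos q_def by blast
  have full: "\<forall>m<q. in_transit F c (p + 1) m \<ge> F (p + 1 + int m)"
    using not_less_Least[of _ "\<lambda>n. free (p + 1 + int n) > 0"] free_pos q_def by (meson not_less)
  have move: "move_ball p st = ((free(p := free p + 1))(p + 1 + int q := free (p + 1 + int q) - 1),
       landed(p + 1 + int q := landed (p + 1 + int q) + 1))"
    by (simp add: move_ball_def st q_def Let_def)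
  have landed_new: "landed_at F (c + 1) (p + 1) j =
      (if j = p + 1 + int q then landed_at F c (p + 1) j + 1 else landed_at F c (p + 1) j)"
    if "j \<ge> p + 1" for j
  proof -
    define n where "n = nat (j - (p + 1))"
    have j: "j = p + 1 + int n" using that by (simp add: n_def)
    have unfold: "landed_at F c' (p + 1) (p + 1 + int m) = min (in_transit F c' (p + 1) m) (F (p + 1 + int m))"
      for c' m by (simp add: landed_at_def)
    consider "n < q" | "n = q" | "q < n" by linarith
    then show ?thesis
    proof cases
      case 1
      then show ?thesis using in_transit_extra_ball_before[OF full, of n] full[rule_format, of n]
        by (simp add: unfold j min_def)
    next
      case 2
      then show ?thesis using in_transit_extra_ball_before[OF full, of n] not_full
        by (simp add: unfold j min_def)
    next
      case 3
      then show ?thesis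
        using in_transit_extra_ball_after[OF full not_full \<open>c \<ge> 0\<close> F_nonneg 3] by (simp add: unfold j)
    qed
  qed
  show ?thesis unfolding sweep_invariant_def move fst_conv snd_conv
  proof (intro conjI allI impI)
    fix j assume "j < p + 1"
    then show "(landed(p + 1 + int q := landed (p + 1 + int q) + 1)) j = min (C j) (F j)"
      using inv st by (simp add: sweep_invariant_def)
  next
    fix j assume j: "p + 1 \<le> j"
    have old: "landed j = landed_at F c (p + 1) j" "free j = F j - landed j"
      using inv st j by (auto simp: sweep_invariant_def)
    then show "(landed(p + 1 + int q := landed (p + 1 + int q) + 1)) j = landed_at F (c + 1) (p + 1) j"
      using landed_new[OF j] by auto
    show "((free(p := free p + 1))(p + 1 + int q := free (p + 1 + int q) - 1)) j =
        F j - (landed(p + 1 + int q := landed (p + 1 + int q) + 1)) j"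
      using old j by auto
  qed
qed

lemma sweep_invariant_move_balls:
  assumes "sweep_invariant F C (p + 1) c st" and "c \<ge> 0"
    and "\<forall>j. F j \<ge> 0" and "\<forall>j\<ge>H. F j \<ge> 1"
  shows "sweep_invariant F C (p + 1) (c + int k) (fold move_ball (replicate k p) st)"
  using assms(1,2)
proof (induction k arbitrary: c st)
  case (Suc k)
  have "sweep_invariant F C (p + 1) (c + 1) (move_ball p st)"
    using sweep_invariant_move_ball[OF Suc.prems assms(3,4)] .
  from Suc.IH[OF this] Suc.prems(2) show ?case by (simp add: algebra_simps)
qed simp

lemma sweep_invariant_pass_site:
  assumes "sweep_invariant F C p (C p) st"
  shows "sweep_invariant F C (p + 1) (C p - min (C p) (F p)) st"
  unfolding sweep_invariant_def
proof (intro conjI allI impI)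
  fix j :: int assume "j < p + 1"
  then show "snd st j = min (C j) (F j)"
    using assms by (cases "j = p") (auto simp: sweep_invariant_def landed_at_def)
next
  fix j assume j: "j \<ge> p + 1"
  have "nat (j - p) = Suc (nat (j - (p + 1)))" using j by simp
  then have "landed_at F (C p) p j = landed_at F (C p - min (C p) (F p)) (p + 1) j"
    by (simp only: landed_at_def in_transit_Suc_shift)
  then show "snd st j = landed_at F (C p - min (C p) (F p)) (p + 1) j"
    using assms j by (auto simp: sweep_invariant_def)
  show "fst st j = F j - snd st j"
    using assms j by (auto simp: sweep_invariant_def)
qed

lemma sweep_invariant_sites:
  assumes "sweep_invariant F C L (C L) st"
    and C_rec: "\<forall>i. C (i + 1) = C i - min (C i) (F i) + f i" and "\<forall>i. f i \<ge> 0"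
    and "\<forall>j. F j \<ge> 0" and "\<forall>j\<ge>H. F j \<ge> 1"
  shows "sweep_invariant F C (L + int N) (C (L + int N))
     (fold (\<lambda>i. fold move_ball (replicate (nat (f i)) i)) (map (\<lambda>n. L + int n) [0..<N]) st)"
proof (induction N)
  case 0
  then show ?case using assms(1) by simp
next
  case (Suc N)
  define p where "p = L + int N"
  define st' where "st' = fold (\<lambda>i. fold move_ball (replicate (nat (f i)) i)) (map (\<lambda>n. L + int n) [0..<N]) st"
  have "sweep_invariant F C p (C p) st'" using Suc p_def st'_def by simp
  then have "sweep_invariant F C (p + 1) (C p - min (C p) (F p)) st'"
    by (rule sweep_invariant_pass_site)
  moreover have "C p - min (C p) (F p) \<ge> 0" by simp
  ultimately have "sweep_invariant F C (p + 1) (C p - min (C p) (F p) + int (nat (f p)))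
      (fold move_ball (replicate (nat (f p)) p) st')"
    using sweep_invariant_move_balls assms(4,5) by blast
  moreover have "C p - min (C p) (F p) + int (nat (f p)) = C (p + 1)" using assms(2,3) by simp
  ultimately show ?case by (simp add: p_def st'_def algebra_simps)
qed

lemma sweep_invariant_final:
  assumes "sweep_invariant F C P (C P) st" and "\<forall>i\<ge>P. C (i + 1) = C i - min (C i) (F i)"
  shows "snd st j = min (C j) (F j)"
proof (cases "j < P")
  case True then show ?thesis using assms by (simp add: sweep_invariant_def)
next
  case False
  have transit: "in_transit F (C P) P n = C (P + int n)" for n
  proof (induction n)
    case (Suc n)
    then show ?case using assms(2)[rule_format, of "P + int n"] by (simp add: algebra_simps)
  qed simp
  have "j = P + int (nat (j - P))" using False by simp
  then have "landed_at F (C P) P j = min (C j) (F j)" unfolding landed_at_def using transit by metis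
  then show ?thesis using assms(1) False by (simp add: sweep_invariant_def)
qed

lemma state_vacuum_below_lo:
  assumes "is_state S" and "j < lo S"
  shows "S j = vac"
proof (rule ccontr)
  assume "S j \<noteq> vac"
  then have "j \<in> support S" by (simp add: support_def)
  moreover have "finite (support S)" using assms(1) by (simp add: is_state_def support_def)
  ultimately have "lo S \<le> j" by (auto simp: lo_def)
  with assms(2) show False by simp
qed

lemma state_vacuum_above:
  assumes "is_state S"
  obtains H where "lo S \<le> H" and "\<forall>j>H. S j = vac"
proof
  have fin: "finite (support S)" using assms by (simp add: is_state_def support_def)
  show "lo S \<le> Max (insert (lo S) (support S))" using fin by simp
  show "\<forall>j>Max (insert (lo S) (support S)). S j = vac"
    using fin by (auto simp: support_def)
qed

section \<open>The carrier\<close>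

text \<open>One carrier step at a site (d, e, ff), written in terms of the number bk of baskets
  after the empty baskets have moved (the carrier brings the b empty baskets of the previous
  site), the resulting number fr of free places, and the number of balls dropped.\<close>
lemma carrier_step_greedy:
  fixes d e ff b c :: int
  assumes "d = e - ff + 1"
  defines "bk \<equiv> e - min d e + b"
  defines "fr \<equiv> 1 + bk - ff"
  shows "carrier_step (d, e, ff) (b, c) =
           ((bk - min c fr + 1, bk, min c fr), (min d e, c - min c fr + ff))"
  using assms by (simp add: carrier_step_def Let_def min_def)

text \<open>Vacuum sites are passed without change, so the carrier may start at any site left of the
  support.\<close>
lemma carrier_before_Suc:
  assumes "is_state S"
  shows "carrier_before S (i + 1) = snd (carrier_step (S i) (carrier_before S i))"
proof (cases "lo S \<le> i")
  case True
  then have "nat (i + 1 - lo S) = Suc (nat (i - lo S))" and "lo S + int (nat (i - lo S)) = i"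
    by auto
  then show ?thesis by (simp add: carrier_before_def)
next
  case False
  then have "S i = vac" using state_vacuum_below_lo[OF assms] by simp
  moreover have "nat (i + 1 - lo S) = 0" "nat (i - lo S) = 0" using False by auto
  ultimately show ?thesis by (simp add: carrier_before_def carrier_step_def vac_def)
qed

lemma carrier_before_baskets:
  assumes "is_state S"
  shows "fst (carrier_before S i) = empty_baskets (S (i - 1))"
proof (cases "i \<le> lo S")
  case True
  then have "nat (i - lo S) = 0" and "S (i - 1) = vac"
    using state_vacuum_below_lo[OF assms] by auto
  then show ?thesis by (simp add: carrier_before_def empty_baskets_def vac_def)
next
  case False
  obtain d e ff where "S (i - 1) = (d, e, ff)" by (cases "S (i - 1)") auto
  moreover obtain b c where "carrier_before S (i - 1) = (b, c)" by (cases "carrier_before S (i - 1)") auto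
  ultimately show ?thesis using carrier_before_Suc[OF assms, of "i - 1"]
    by (simp add: carrier_step_def Let_def empty_baskets_def)
qed

lemma carrier_at_site:
  assumes "is_state S" and "carrier_before S i = (b, c)"
  shows "T_carrier S i = (baskets1 S i - min c (free1 S i) + 1, baskets1 S i, min c (free1 S i))"
    and "snd (carrier_before S (i + 1)) = c - min c (free1 S i) + balls (S i)"
proof -
  obtain d e ff where s: "S i = (d, e, ff)" and "d = e - ff + 1"
    using assms(1) by (cases "S i") (auto simp: is_state_def valid_site_def split: prod.splits)
  note step = carrier_step_greedy[OF this(2), of b c]
  have "b = empty_baskets (S (i - 1))" using carrier_before_baskets[OF assms(1), of i] assms(2) by simp
  then have "baskets1 S i = e - min d e + b" and "free1 S i = 1 + (e - min d e + b) - ff"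
    by (simp_all add: s free1_def baskets1_def baskets_def balls_def empty_baskets_def)
  then show "T_carrier S i = (baskets1 S i - min c (free1 S i) + 1, baskets1 S i, min c (free1 S i))"
    and "snd (carrier_before S (i + 1)) = c - min c (free1 S i) + balls (S i)"
    using step assms carrier_before_Suc[OF assms(1), of i] s
    by (simp_all add: T_carrier_def balls_def)
qed

section \<open>The combinatorial description\<close>

lemma free1_nonneg:
  assumes "is_state S"
  shows "free1 S j \<ge> 0"
  using assms[unfolded is_state_def, THEN conjunct1, rule_format, of j]
    assms[unfolded is_state_def, THEN conjunct1, rule_format, of "j - 1"]
  by (cases "S j"; cases "S (j - 1)")
    (simp add: valid_site_def free1_def baskets1_def baskets_def balls_def empty_baskets_def min_def)

lemma free1_vacuum: "S j = vac \<Longrightarrow> S (j - 1) = vac \<Longrightarrow> free1 S j = 1"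
  by (simp add: free1_def baskets1_def baskets_def balls_def empty_baskets_def vac_def)

lemma fold_concat_map: "fold g (concat (map h xs)) s = fold (\<lambda>i. fold g (h i)) xs s"
  by (induction xs arbitrary: s) auto

lemma concat_map_filter_nil:
  "(\<And>x. \<not> P x \<Longrightarrow> h x = []) \<Longrightarrow> concat (map h (filter P xs)) = concat (map h xs)"
  by (induction xs) auto

lemma ball_list_along:
  assumes "sorted_wrt (<) xs" and "support S \<subseteq> set xs"
  shows "ball_list S = concat (map (\<lambda>i. replicate (nat (balls (S i))) i) xs)"
proof -
  have "finite (support S)" using assms(2) finite_subset by blast
  then have "sorted_list_of_set (support S) = filter (\<lambda>i. i \<in> support S) xs"
    using assms by (intro strict_sorted_equal) (auto intro: sorted_wrt_filter)
  then show ?thesis unfolding ball_list_def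
    by (simp only:) (rule concat_map_filter_nil, simp add: support_def balls_def vac_def)
qed

lemma landed_balls:
  assumes "is_state S"
  shows "snd (fold move_ball (ball_list S) (free1 S, \<lambda>_. 0)) j
           = min (snd (carrier_before S j)) (free1 S j)"
proof -
  obtain H where "lo S \<le> H" and above: "\<forall>j>H. S j = vac"
    using state_vacuum_above[OF assms] .
  define L where "L = lo S"
  define C where "C = (\<lambda>i. snd (carrier_before S i))"
  define f where "f = (\<lambda>i. balls (S i))"
  define N where "N = nat (H - L + 1)"
  define xs where "xs = map (\<lambda>n. L + int n) [0..<N]"
  have sites: "L + int N = H + 1" using \<open>lo S \<le> H\<close> by (simp add: N_def L_def)
  have "support S \<subseteq> set xs"
  proof
    fix j assume "j \<in> support S"
    then have "L \<le> j" "j \<le> H"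
      using above state_vacuum_below_lo[OF assms] by (force simp: support_def L_def)+
    then have "j = L + int (nat (j - L))" "nat (j - L) \<in> {0..<N}" by (auto simp: N_def)
    then show "j \<in> set xs" unfolding xs_def set_map set_upt by blast
  qed
  moreover have "sorted_wrt (<) xs"
    unfolding xs_def sorted_wrt_map by (rule sorted_wrt_mono_rel[OF _ sorted_wrt_upt]) auto
  ultimately have balls_list: "ball_list S = concat (map (\<lambda>i. replicate (nat (f i)) i) xs)"
    unfolding f_def by (rule ball_list_along[rotated])
  have C_rec: "\<forall>i. C (i + 1) = C i - min (C i) (free1 S i) + f i"
    using carrier_at_site(2)[OF assms surjective_pairing] by (simp add: C_def f_def)
  have f_nonneg: "\<forall>i. f i \<ge> 0"
  proof
    fix i
    have "valid_site (S i)" using assms by (simp add: is_state_def)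
    then show "f i \<ge> 0" by (cases "S i") (simp add: f_def balls_def valid_site_def)
  qed
  have F_far: "\<forall>j\<ge>H + 2. free1 S j \<ge> 1" using above free1_vacuum by simp
  have F_nonneg: "\<forall>j. free1 S j \<ge> 0" using free1_nonneg[OF assms] by blast
  have "sweep_invariant (free1 S) C L (C L) (free1 S, \<lambda>_. 0)"
    using in_transit_zero F_nonneg
    by (simp add: sweep_invariant_def landed_at_def C_def L_def carrier_before_def)
  from sweep_invariant_sites[OF this C_rec f_nonneg F_nonneg F_far, of N]
  have "sweep_invariant (free1 S) C (H + 1) (C (H + 1)) (fold move_ball (ball_list S) (free1 S, \<lambda>_. 0))"
    by (simp only: balls_list fold_concat_map xs_def sites)
  moreover have "\<forall>i\<ge>H + 1. C (i + 1) = C i - min (C i) (free1 S i)"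
    using C_rec above by (simp add: f_def balls_def vac_def)
  ultimately show ?thesis by (simp add: sweep_invariant_final C_def)
qed

theorem mainTheorem2:
  fixes S :: bstate
  assumes "is_state S"
  shows "T_carrier S = T_comb S"
proof
  fix i
  obtain b c where bc: "carrier_before S i = (b, c)" by (cases "carrier_before S i")
  have "snd (fold move_ball (ball_list S) (free1 S, \<lambda>_. 0)) i = min c (free1 S i)"
    using landed_balls[OF assms, of i] bc by simp
  then show "T_carrier S i = T_comb S i"
    using carrier_at_site(1)[OF assms bc] by (simp add: T_comb_def Let_def)
qed

end
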